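(* Let $G$ be a finite group and let $S$ be a set of non-identity arrows of $G$. Let $(K,H)$ be a non-identity arrow (so $K< H\leqslant G$). If $(K,H)\in\langle S\rangle$, then there exist an arrow $(K',H')\in S$ and an element $g\in G$ such that $K\leqslant gK'g^{-1}$ and $H\leqslant gH'g^{-1}$.
   Context: For a finite group $G$, an arrow is a pair $(K,H)$ of subgroups with $K\leqslant H$; it is an identity arrow if $K=H$. A $G$-transfer system is a set $\mathsf{T}$ of arrows containing all identity arrows and closed under composition ($(A,B),(B,C)\in\mathsf{T}\Rightarrow(A,C)\in\mathsf{T}$), conjugation ($(A,B)\in\mathsf{T}\Rightarrow(gAg^{-1},gBg^{-1})\in\mathsf{T}$ for all $g\in G$) and restriction ($(A,B)\in\mathsf{T}$, $L\leqslant B\Rightarrow(A\cap L,L)\in\mathsf{T}$). For a set $S$ of arrows, $\langle S\rangle$ denotes the smallest $G$-transfer system containing $S$. *)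

theory Defs
  imports "HOL-Algebra.Group"
begin

definition conj_set :: "('a, 'b) monoid_scheme \<Rightarrow> 'a \<Rightarrow> 'a set \<Rightarrow> 'a set" where
  "conj_set G g A = (\<lambda>a. g \<otimes>\<^bsub>G\<^esub> a \<otimes>\<^bsub>G\<^esub> inv\<^bsub>G\<^esub> g) ` A"

definition arrows :: "('a, 'b) monoid_scheme \<Rightarrow> ('a set \<times> 'a set) set" where
  "arrows G = {(K, H). subgroup K G \<and> subgroup H G \<and> K \<subseteq> H}"

definition transfer_system :: "('a, 'b) monoid_scheme \<Rightarrow> ('a set \<times> 'a set) set \<Rightarrow> bool" where
  "transfer_system G T \<longleftrightarrow>
     T \<subseteq> arrows G \<and>
     (\<forall>H. subgroup H G \<longrightarrow> (H, H) \<in> T) \<and>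
     (\<forall>A B C. (A, B) \<in> T \<longrightarrow> (B, C) \<in> T \<longrightarrow> (A, C) \<in> T) \<and>
     (\<forall>A B g. (A, B) \<in> T \<longrightarrow> g \<in> carrier G \<longrightarrow> (conj_set G g A, conj_set G g B) \<in> T) \<and>
     (\<forall>A B L. (A, B) \<in> T \<longrightarrow> subgroup L G \<longrightarrow> L \<subseteq> B \<longrightarrow> (A \<inter> L, L) \<in> T)"

definition generated_ts :: "('a, 'b) monoid_scheme \<Rightarrow> ('a set \<times> 'a set) set \<Rightarrow> ('a set \<times> 'a set) set" where
  "generated_ts G S = \<Inter> {T. transfer_system G T \<and> S \<subseteq> T}"

end

theory Submission
  imports Defs
begin

text \<open>The identity arrows together with the arrows (K, H) lying inside a single conjugate
  (gK'g^-1, gH'g^-1) of an arrow of S form a transfer system containing S, hence containing the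
  one generated by S: composition and restriction only shrink the ends of an arrow, and
  conjugating by h turns the witness g into hg.\<close>

lemma (in group) conj_hom:
  assumes "g \<in> carrier G"
  shows "(\<lambda>a. g \<otimes> a \<otimes> inv g) \<in> hom G G"
proof (rule homI)
  fix x y assume "x \<in> carrier G" "y \<in> carrier G"
  with assms show "g \<otimes> (x \<otimes> y) \<otimes> inv g = g \<otimes> x \<otimes> inv g \<otimes> (g \<otimes> y \<otimes> inv g)"
    by (simp add: m_assoc[symmetric]) (simp add: m_assoc)
qed (use assms in simp)

lemma (in group) subgroup_conj_set:
  assumes "g \<in> carrier G" and "subgroup A G"
  shows "subgroup (conj_set G g A) G"
proof -
  have "group_hom G G (\<lambda>a. g \<otimes> a \<otimes> inv g)"
    using conj_hom[OF assms(1)] by (simp add: group_hom_def group_hom_axioms_def is_group)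
  then show ?thesis
    unfolding conj_set_def using group_hom.subgroup_img_is_subgroup assms(2) by blast
qed

lemma conj_set_mono: "A \<subseteq> B \<Longrightarrow> conj_set G g A \<subseteq> conj_set G g B"
  unfolding conj_set_def by blast

lemma (in group) conj_set_conj_set:
  assumes "g \<in> carrier G" and "h \<in> carrier G" and "A \<subseteq> carrier G"
  shows "conj_set G h (conj_set G g A) = conj_set G (h \<otimes> g) A"
proof -
  have "h \<otimes> (g \<otimes> a \<otimes> inv g) \<otimes> inv h = h \<otimes> g \<otimes> a \<otimes> inv (h \<otimes> g)" if "a \<in> carrier G" for a
    using that assms by (simp add: m_assoc inv_mult_group)
  then show ?thesis
    unfolding conj_set_def image_image using assms(3) by (intro image_cong) auto
qed

lemma (in group) conj_set_one:
  assumes "A \<subseteq> carrier G"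
  shows "conj_set G \<one> A = A"
  unfolding conj_set_def using assms by (auto simp: image_iff) (metis subsetD r_one l_one)

lemma generated_ts_least:
  assumes "transfer_system G T" and "S \<subseteq> T"
  shows "generated_ts G S \<subseteq> T"
  unfolding generated_ts_def using assms by blast

definition subconjugate :: "('a, 'b) monoid_scheme \<Rightarrow> ('a set \<times> 'a set) set \<Rightarrow> 'a set \<Rightarrow> 'a set \<Rightarrow> bool"
  where "subconjugate G S K H \<longleftrightarrow>
    (\<exists>K' H' g. (K', H') \<in> S \<and> g \<in> carrier G \<and> K \<subseteq> conj_set G g K' \<and> H \<subseteq> conj_set G g H')"

lemma subconjugate_antimono:
  assumes "subconjugate G S K H" and "K0 \<subseteq> K" and "H0 \<subseteq> H"
  shows "subconjugate G S K0 H0"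
  using assms unfolding subconjugate_def by (meson order_trans)

lemma (in group) subconjugate_of_mem:
  assumes "S \<subseteq> arrows G" and "(K, H) \<in> S"
  shows "subconjugate G S K H"
proof -
  have "K \<subseteq> carrier G" "H \<subseteq> carrier G"
    using assms subgroup.subset unfolding arrows_def by blast+
  then have "K \<subseteq> conj_set G \<one> K" "H \<subseteq> conj_set G \<one> H"
    by (simp_all add: conj_set_one)
  then show ?thesis
    unfolding subconjugate_def using assms(2) one_closed by blast
qed

lemma (in group) subconjugate_conj_set:
  assumes "S \<subseteq> arrows G" and "g \<in> carrier G" and "subconjugate G S A B"
  shows "subconjugate G S (conj_set G g A) (conj_set G g B)"
proof -
  obtain K' H' h where S: "(K', H') \<in> S" and h: "h \<in> carrier G"
    and A: "A \<subseteq> conj_set G h K'" and B: "B \<subseteq> conj_set G h H'"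
    using assms(3) unfolding subconjugate_def by blast
  have "K' \<subseteq> carrier G" "H' \<subseteq> carrier G"
    using S assms(1) subgroup.subset unfolding arrows_def by blast+
  then have "conj_set G g A \<subseteq> conj_set G (g \<otimes> h) K'" "conj_set G g B \<subseteq> conj_set G (g \<otimes> h) H'"
    using conj_set_mono[OF A, of G g] conj_set_mono[OF B, of G g] conj_set_conj_set[OF h assms(2)]
    by simp_all
  moreover have "g \<otimes> h \<in> carrier G"
    using assms(2) h by simp
  ultimately show ?thesis
    unfolding subconjugate_def using S by blast
qed

definition trivial_or_subconjugate :: "('a, 'b) monoid_scheme \<Rightarrow> ('a set \<times> 'a set) set \<Rightarrow> ('a set \<times> 'a set) set"
  where "trivial_or_subconjugate G S = {(K, H) \<in> arrows G. K = H \<or> subconjugate G S K H}"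

lemma (in group) transfer_system_trivial_or_subconjugate:
  assumes "S \<subseteq> arrows G"
  shows "transfer_system G (trivial_or_subconjugate G S)"
  unfolding transfer_system_def
proof (intro conjI allI impI)
  let ?T = "trivial_or_subconjugate G S"
  show "?T \<subseteq> arrows G"
    unfolding trivial_or_subconjugate_def by auto
  show "(H, H) \<in> ?T" if "subgroup H G" for H
    using that unfolding trivial_or_subconjugate_def arrows_def by auto
  show "(A, C) \<in> ?T" if AB: "(A, B) \<in> ?T" and BC: "(B, C) \<in> ?T" for A B C
  proof (cases "B = C")
    case True
    with AB show ?thesis by simp
  next
    case False
    with AB BC have "(A, C) \<in> arrows G" and "subconjugate G S A C"
      using subconjugate_antimono[of G S B C A C]
      unfolding trivial_or_subconjugate_def arrows_def by auto
    then show ?thesis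
      unfolding trivial_or_subconjugate_def by simp
  qed
  show "(conj_set G g A, conj_set G g B) \<in> ?T" if AB: "(A, B) \<in> ?T" and g: "g \<in> carrier G"
    for A B g
  proof -
    from AB have "(conj_set G g A, conj_set G g B) \<in> arrows G"
      using subgroup_conj_set[OF g] conj_set_mono[of A B G g]
      unfolding trivial_or_subconjugate_def arrows_def by simp
    moreover from AB have "A = B \<or> subconjugate G S A B"
      unfolding trivial_or_subconjugate_def by simp
    ultimately show ?thesis
      using subconjugate_conj_set[OF assms g, of A B]
      unfolding trivial_or_subconjugate_def by auto
  qed
  show "(A \<inter> L, L) \<in> ?T" if AB: "(A, B) \<in> ?T" and L: "subgroup L G" "L \<subseteq> B" for A B L
  proof -
    from AB L have "(A \<inter> L, L) \<in> arrows G"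
      using subgroups_Inter_pair unfolding trivial_or_subconjugate_def arrows_def by simp
    moreover from AB have "A = B \<or> subconjugate G S A B"
      unfolding trivial_or_subconjugate_def by simp
    ultimately show ?thesis
      using L(2) subconjugate_antimono[of G S A B "A \<inter> L" L]
      unfolding trivial_or_subconjugate_def by (auto simp: Int_absorb1)
  qed
qed

theorem lemma2p9:
  fixes G (structure) and S :: "('a set \<times> 'a set) set" and K H :: "'a set"
  assumes "group G" and "finite (carrier G)"
    and "S \<subseteq> arrows G" and "\<forall>(A, B) \<in> S. A \<noteq> B"
    and "(K, H) \<in> arrows G" and "K \<noteq> H"
    and "(K, H) \<in> generated_ts G S"
  shows "\<exists>K' H' g. (K', H') \<in> S \<and> g \<in> carrier G \<and>
           K \<subseteq> conj_set G g K' \<and> H \<subseteq> conj_set G g H'"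
proof -
  interpret group G by fact
  have "S \<subseteq> trivial_or_subconjugate G S"
    using assms(3) subconjugate_of_mem[OF assms(3)] unfolding trivial_or_subconjugate_def by auto
  with transfer_system_trivial_or_subconjugate[OF assms(3)]
  have "(K, H) \<in> trivial_or_subconjugate G S"
    using generated_ts_least assms(7) by blast
  with assms(6) show ?thesis
    unfolding trivial_or_subconjugate_def subconjugate_def by blast
qed

end
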